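(* Let $d\ge 1$ and consider the linear hyperbolic system $\partial_t \mathbf{u} + \sum_{i=1}^{d} A_i \partial_{x_i}\mathbf{u} = 0$ on $\prod_{i=1}^d[0,1]$ with periodic boundary conditions, where the $A_i$ are real constant matrices such that every real linear combination $\sum_i \alpha_i A_i$ is diagonalizable with real eigenvalues. Let $\mathcal{L}$ be a linear finite difference scheme for this system on the uniform grid with $\Delta x_j = 1/N_j$, with Fourier symbol matrix $Q_{\mathcal{L}}(\mathbf{k})$, let $Q_{\mathcal{L}^*}(\mathbf{k})$ be the Fourier symbol matrix of the backward scheme $\mathcal{L}^*$, and let $Q_B(\mathbf{k}) = Q_{\mathcal{L}}(\mathbf{k})\left(I + \tfrac12\left(I - Q_{\mathcal{L}^*}(\mathbf{k})Q_{\mathcal{L}}(\mathbf{k})\right)\right)$ be the Fourier symbol matrix of the BFECC scheme based on $\mathcal{L}$. Suppose that for all $\mathbf{k}\in\mathcal{F}_{\mathbf{N}}$: (1) $Q_{\mathcal{L}^*}(\mathbf{k}) = \overline{Q_{\mathcal{L}}(\mathbf{k})}$ (entrywise complex conjugate); (2) $Q_{\mathcal{L}^*}(\mathbf{k})Q_{\mathcal{L}}(\mathbf{k}) = Q_{\mathcal{L}}(\mathbf{k})Q_{\mathcal{L}^*}(\mathbf{k})$; (3) $\mathrm{Re}(Q_{\mathcal{L}}(\mathbf{k}))$ and $\mathrm{Im}(Q_{\mathcal{L}}(\mathbf{k}))$ (entrywise real and imaginary parts) are diagonalizable with real eigenvalues. Then $|\rho(Q_B(\mathbf{k}))| \le 1$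 for all $\mathbf{k}\in\mathcal{F}_{\mathbf{N}}$ if and only if $|\rho(Q_{\mathcal{L}}(\mathbf{k}))|\le 2$ for all $\mathbf{k}\in\mathcal{F}_{\mathbf{N}}$, where $\rho$ denotes spectral radius.
   Context: Grid: $\mathbf{N}=(N_1,\dots,N_d)$, grid indices $\mathbf{j}\in\mathcal{D}_{\mathbf{N}}=\mathbb{Z}^d\cap\prod_i[0,N_i-1]$, grid points $\mathbf{x}_{\mathbf{j}}=(j_1\Delta x_1,\dots,j_d\Delta x_d)$, numerical solution $\mathbf{U}^n_{\mathbf{j}}\approx \mathbf{u}(\mathbf{x}_{\mathbf{j}},t_n)$, and $\mathbf{U}^{n+1}=\mathcal{L}\mathbf{U}^n$ with $\mathcal{L}$ linear. Dual index set $\mathcal{F}_{\mathbf{N}}=\mathbb{Z}^d\cap\prod_i[1-N_i,N_i-1]$. Writing $\mathbf{U}^n_{\mathbf{j}}=\sum_{\mathbf{k}\in\mathcal{F}_{\mathbf{N}}}\mathbf{C}^n_{\mathbf{k}}e^{2\pi i\mathbf{k}\cdot\mathbf{x}_{\mathbf{j}}}$, linearity gives $\mathbf{C}^{n+1}_{\mathbf{k}}=Q_{\mathcal{L}}(\mathbf{k})\mathbf{C}^n_{\mathbf{k}}$; $Q_{\mathcal{L}}(\mathbf{k})$ is the Fourier symbol matrix. The backward scheme $\mathcal{L}^*$ is the scheme $\mathcal{L}$ applied to the time-reversed system $\partial_t\mathbf{u}-\sum_i A_i\partial_{x_i}\mathbf{u}=0$. The BFECC scheme based on $\mathcal{L}$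 updates $\mathbf{U}^n$ by: $\tilde{\mathbf{U}}^{n+1}=\mathcal{L}\mathbf{U}^n$; $\tilde{\mathbf{U}}^n=\mathcal{L}^*\tilde{\mathbf{U}}^{n+1}$; $\mathbf{U}^{n+1}=\mathcal{L}(\mathbf{U}^n+\tfrac12(\mathbf{U}^n-\tilde{\mathbf{U}}^n))$; its Fourier symbol matrix is $Q_B$ as given. *)

theory Defs
  imports "HOL-Analysis.Analysis" "Jordan_Normal_Form.Spectral_Radius"
begin

definition real_diagonalizable :: "nat \<Rightarrow> real mat \<Rightarrow> bool" where
  "real_diagonalizable n R \<longleftrightarrow> R \<in> carrier_mat n n \<and> (\<exists>D. diagonal_mat D \<and> similar_mat R D)"

definition dual_index_set :: "nat list \<Rightarrow> int list set" where
  "dual_index_set N = {k. length k = length N \<and>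
      (\<forall>i<length N. 1 - int (N ! i) \<le> k ! i \<and> k ! i \<le> int (N ! i) - 1)}"

definition conj_mat :: "complex mat \<Rightarrow> complex mat" where
  "conj_mat A = map_mat cnj A"

definition re_mat :: "complex mat \<Rightarrow> real mat" where
  "re_mat A = map_mat Re A"

definition im_mat :: "complex mat \<Rightarrow> real mat" where
  "im_mat A = map_mat Im A"

definition bfecc_symbol :: "nat \<Rightarrow> complex mat \<Rightarrow> complex mat \<Rightarrow> complex mat" where
  "bfecc_symbol m QL QLs = QL * (1\<^sub>m m + (1/2 :: complex) \<cdot>\<^sub>m (1\<^sub>m m - QLs * QL))"

definition hyperbolic_system :: "nat \<Rightarrow> nat \<Rightarrow> (nat \<Rightarrow> real mat) \<Rightarrow> bool" where
  "hyperbolic_system d m A \<longleftrightarrow> (\<forall>i<d. A i \<in> carrier_mat m m) \<and>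
     (\<forall>\<alpha> :: nat \<Rightarrow> real. real_diagonalizable m (mat m m (\<lambda>(r, c). \<Sum>i<d. \<alpha> i * A i $$ (r, c))))"

end

theory Submission
  imports Defs "Jordan_Normal_Form.Jordan_Normal_Form_Uniqueness"
begin

text \<open>Write Q = R + i I with R, I the (complexified) real and imaginary parts of Q. If Q
  commutes with its conjugate, then R = (Q + conj Q)/2 and I = (Q - conj Q)/(2i) commute with each
  other and with every matrix commuting with Q and conj Q, in particular with the BFECC symbol Q_B.
  Since R and I are diagonalizable with real eigenvalues, every eigenvector of such a matrix can be
  replaced by a common eigenvector on which R and I act by real scalars r and s. There Q acts by
  z = r + i s, conj Q by cnj z, and Q_B by g(z) = z (1 + (1 - |z|^2)/2), so the spectrum of Q_B is
  the image of the spectrum of Q under g. Finally |g(z)| = |z| |3 - |z|^2| / 2, which is at most 1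
  exactly when |z| is at most 2.\<close>

lemma (in semiring_hom) similar_mat_hom:
  assumes "similar_mat A B"
  shows "similar_mat (mat\<^sub>h A) (mat\<^sub>h B)"
proof -
  from similar_matD[OF assms] obtain n P Q where
    carr: "{A, B, P, Q} \<subseteq> carrier_mat n n" and PQ: "P * Q = 1\<^sub>m n" and QP: "Q * P = 1\<^sub>m n"
    and A: "A = P * B * Q"
    by blast
  show ?thesis
  proof (rule similar_matI[of _ _ "mat\<^sub>h P" "mat\<^sub>h Q" n])
    show "mat\<^sub>h P * mat\<^sub>h Q = 1\<^sub>m n" "mat\<^sub>h Q * mat\<^sub>h P = 1\<^sub>m n"
      using carr PQ QP by (metis insert_subset mat_hom_mult mat_hom_one)+
    have "mat\<^sub>h (P * B * Q) = mat\<^sub>h (P * B) * mat\<^sub>h Q"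
      using carr by (intro mat_hom_mult[of _ n n]) auto
    then show "mat\<^sub>h A = mat\<^sub>h P * mat\<^sub>h B * mat\<^sub>h Q"
      using carr unfolding A by (simp add: mat_hom_mult[of P n n B n])
  qed (use carr in auto)
qed

(* The vector (A - a_1 I) ... (A - a_k I) v: square matrices of varying dimension form no
   monoid, so the product of the linear factors is applied to v one factor at a time. *)
fun apply_linear_factors :: "'a::field mat \<Rightarrow> 'a list \<Rightarrow> 'a vec \<Rightarrow> 'a vec" where
  "apply_linear_factors A [] v = v"
| "apply_linear_factors A (a # as) v = char_matrix A a *\<^sub>v apply_linear_factors A as v"

lemma apply_linear_factors_carrier:
  "A \<in> carrier_mat n n \<Longrightarrow> v \<in> carrier_vec n \<Longrightarrow> apply_linear_factors A as v \<in> carrier_vec n"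
  by (induction as) (auto intro: mult_mat_vec_carrier[OF char_matrix_closed])

lemma apply_linear_factors_similar:
  assumes wit: "similar_mat_wit A B P Q" and A: "A \<in> carrier_mat n n" and v: "v \<in> carrier_vec n"
  shows "apply_linear_factors A as v = P *\<^sub>v apply_linear_factors B as (Q *\<^sub>v v)"
proof (induction as)
  case Nil
  from similar_mat_witD2[OF A wit] have "P \<in> carrier_mat n n" "Q \<in> carrier_mat n n" "P * Q = 1\<^sub>m n"
    by auto
  then show ?case using v by (simp flip: assoc_mult_mat_vec)
next
  case (Cons a as)
  from similar_mat_witD2[OF A wit] have B: "B \<in> carrier_mat n n"
    and P: "P \<in> carrier_mat n n" and Q: "Q \<in> carrier_mat n n" and QP: "Q * P = 1\<^sub>m n" by auto
  from similar_mat_witD2[OF char_matrix_closed[OF A] similar_mat_wit_char_matrix[OF wit]]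
  have char: "char_matrix A a = P * char_matrix B a * Q" by auto
  define x where "x = apply_linear_factors B as (Q *\<^sub>v v)"
  have x: "x \<in> carrier_vec n"
    unfolding x_def by (intro apply_linear_factors_carrier[OF B]) (use Q v in auto)
  have "Q *\<^sub>v (P *\<^sub>v x) = x" using P Q QP x by (simp flip: assoc_mult_mat_vec)
  then have "(P * char_matrix B a * Q) *\<^sub>v (P *\<^sub>v x) = P *\<^sub>v (char_matrix B a *\<^sub>v x)"
    using P Q B x
    by (simp add: assoc_mult_mat_vec[of _ n n] assoc_mult_mat_vec[OF P char_matrix_closed[OF B]])
  then show ?case using Cons by (simp add: char x_def)
qed

lemma diagonal_mat_mult_vec_nth:
  assumes D: "D \<in> carrier_mat n n" "diagonal_mat D" and u: "u \<in> carrier_vec n" and i: "i < n"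
  shows "(D *\<^sub>v u) $ i = D $$ (i, i) * u $ i"
proof -
  have "(D *\<^sub>v u) $ i = (\<Sum>j<n. D $$ (i, j) * u $ j)"
    using D u i by (simp add: scalar_prod_def atLeast0LessThan)
  also have "\<dots> = (\<Sum>j<n. if j = i then D $$ (i, i) * u $ i else 0)"
    using D i by (intro sum.cong) (auto simp: diagonal_mat_def)
  finally show ?thesis using i by simp
qed

definition annihilated_by :: "'a::field mat \<Rightarrow> 'a list \<Rightarrow> bool" where
  "annihilated_by A as \<longleftrightarrow>
     (\<forall>v \<in> carrier_vec (dim_row A). apply_linear_factors A as v = 0\<^sub>v (dim_row A))"

lemma annihilated_by_similar:
  assumes "similar_mat A B" and "annihilated_by B as"
  shows "annihilated_by A as"
proof -
  from assms(1) obtain P Q where wit: "similar_mat_wit A B P Q"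
    unfolding similar_mat_def by blast
  define n where "n = dim_row A"
  from similar_mat_witD[OF n_def wit]
  have carr: "A \<in> carrier_mat n n" "B \<in> carrier_mat n n" "P \<in> carrier_mat n n" "Q \<in> carrier_mat n n"
    by auto
  have "apply_linear_factors A as v = 0\<^sub>v n" if v: "v \<in> carrier_vec n" for v
  proof -
    have "apply_linear_factors B as (Q *\<^sub>v v) = 0\<^sub>v n"
      using assms(2) carr v unfolding annihilated_by_def by auto
    then show ?thesis using apply_linear_factors_similar[OF wit carr(1) v] carr(3) by auto
  qed
  then show ?thesis unfolding annihilated_by_def n_def by blast
qed

lemma diagonal_mat_annihilated_by_diag_mat:
  fixes D :: "'a::field mat"
  assumes D: "D \<in> carrier_mat n n" "diagonal_mat D"
  shows "annihilated_by D (diag_mat D)"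
  unfolding annihilated_by_def
proof (intro ballI)
  fix v :: "'a vec" assume "v \<in> carrier_vec (dim_row D)"
  then have v: "v \<in> carrier_vec n" using D(1) by simp
  have char: "char_matrix D a \<in> carrier_mat n n" "diagonal_mat (char_matrix D a)"
    "i < n \<Longrightarrow> char_matrix D a $$ (i, i) = D $$ (i, i) - a" for a i
    using D by (auto simp: char_matrix_def diagonal_mat_def)
  have nth: "i < n \<Longrightarrow> apply_linear_factors D as v $ i = (\<Prod>a\<leftarrow>as. D $$ (i, i) - a) * v $ i"
    for as i
    by (induction as)
      (simp_all add: diagonal_mat_mult_vec_nth[OF char(1,2)] char(3)
        apply_linear_factors_carrier[OF D(1) v])
  have "i < n \<Longrightarrow> (\<Prod>a\<leftarrow>diag_mat D. D $$ (i, i) - a) = 0" for i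
    using D(1) by (auto simp: diag_mat_def prod_list_zero_iff)
  then show "apply_linear_factors D (diag_mat D) v = 0\<^sub>v (dim_row D)"
    using D(1) by (intro eq_vecI) (auto simp: nth apply_linear_factors_carrier[OF D(1) v])
qed

lemma eigenvector_in_invariant_set:
  fixes A :: "'a::field mat"
  assumes A: "A \<in> carrier_mat n n" and v: "v \<in> carrier_vec n" "v \<noteq> 0\<^sub>v n" "V v"
    and invariant: "\<And>a u. u \<in> carrier_vec n \<Longrightarrow> V u \<Longrightarrow> V (char_matrix A a *\<^sub>v u)"
    and annihilated: "annihilated_by A as"
  shows "\<exists>a \<in> set as. \<exists>w. V w \<and> eigenvector A w a"
proof -
  have V: "V (apply_linear_factors A bs v)" for bs
    by (induction bs) (simp_all add: v invariant apply_linear_factors_carrier[OF A v(1)])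
  \<comment> \<open>The last nonzero vector of the chain v, (A - a_k I) v, ... is the eigenvector.\<close>
  have "apply_linear_factors A bs v = 0\<^sub>v n \<Longrightarrow> \<exists>a \<in> set bs. \<exists>w. V w \<and> eigenvector A w a"
    for bs
  proof (induction bs)
    case Nil
    then show ?case using v by simp
  next
    case (Cons a bs)
    define u where "u = apply_linear_factors A bs v"
    show ?case
    proof (cases "u = 0\<^sub>v n")
      case True
      then show ?thesis using Cons.IH u_def by auto
    next
      case False
      have "eigenvector A u a"
        unfolding eigenvector_char_matrix[OF A] u_def
        using False Cons.prems apply_linear_factors_carrier[OF A v(1)] by (simp add: u_def)
      then show ?thesis using V u_def by auto
    qed
  qed
  then show ?thesis using annihilated A v(1) unfolding annihilated_by_def by simp
qed

lemma mat_commute_add: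
  fixes A B C :: "'a::semiring_0 mat"
  assumes "A \<in> carrier_mat n n" "B \<in> carrier_mat n n" "C \<in> carrier_mat n n"
    and "A * B = B * A" "A * C = C * A"
  shows "A * (B + C) = (B + C) * A"
  using assms by (simp add: mult_add_distrib_mat[of A n n] add_mult_distrib_mat[of B n n])

lemma mat_commute_minus:
  fixes A B C :: "'a::ring mat"
  assumes "A \<in> carrier_mat n n" "B \<in> carrier_mat n n" "C \<in> carrier_mat n n"
    and "A * B = B * A" "A * C = C * A"
  shows "A * (B - C) = (B - C) * A"
  using assms by (simp add: mult_minus_distrib_mat[of A n n] minus_mult_distrib_mat[of B n n])

lemma mat_commute_mult:
  fixes A B C :: "'a::semiring_0 mat"
  assumes "A \<in> carrier_mat n n" "B \<in> carrier_mat n n" "C \<in> carrier_mat n n"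
    and "A * B = B * A" "A * C = C * A"
  shows "A * (B * C) = (B * C) * A"
proof -
  have "A * (B * C) = (A * B) * C" using assms(1-3) by (simp add: assoc_mult_mat)
  also have "\<dots> = B * (A * C)" using assms by (simp add: assoc_mult_mat[of B n n A n C n])
  also have "\<dots> = (B * C) * A" using assms by (simp add: assoc_mult_mat[of B n n C n A n])
  finally show ?thesis .
qed

lemma mat_commute_smult:
  fixes A B :: "'a::comm_ring mat"
  assumes "A \<in> carrier_mat n n" "B \<in> carrier_mat n n" and "A * B = B * A"
  shows "A * (c \<cdot>\<^sub>m B) = (c \<cdot>\<^sub>m B) * A"
  using assms by (simp add: mult_smult_distrib[of A n n] mult_smult_assoc_mat[of B n n])

lemma char_matrix_commute:
  fixes A M :: "'a::field mat"
  assumes A: "A \<in> carrier_mat n n" and M: "M \<in> carrier_mat n n" and AM: "A * M = M * A"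
  shows "char_matrix A a * M = M * char_matrix A a"
proof -
  have "M * 1\<^sub>m n = 1\<^sub>m n * M" using M by simp
  then have "M * (A + (- a) \<cdot>\<^sub>m 1\<^sub>m n) = (A + (- a) \<cdot>\<^sub>m 1\<^sub>m n) * M"
    using mat_commute_add[OF M A smult_carrier_mat[OF one_carrier_mat] AM[symmetric]
        mat_commute_smult[OF M one_carrier_mat]] by blast
  then show ?thesis using A unfolding char_matrix_def by simp
qed

lemma commute_preserves_eigenspace:
  fixes A M :: "'a::field mat"
  assumes A: "A \<in> carrier_mat n n" and M: "M \<in> carrier_mat n n" and AM: "A * M = M * A"
    and u: "u \<in> carrier_vec n" and Mu: "M *\<^sub>v u = \<mu> \<cdot>\<^sub>v u"
  shows "M *\<^sub>v (A *\<^sub>v u) = \<mu> \<cdot>\<^sub>v (A *\<^sub>v u)"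
proof -
  have "M *\<^sub>v (A *\<^sub>v u) = A *\<^sub>v (M *\<^sub>v u)"
    using A M u by (simp flip: assoc_mult_mat_vec add: AM)
  also have "\<dots> = \<mu> \<cdot>\<^sub>v (A *\<^sub>v u)"
    using A u by (simp add: Mu mult_mat_vec[OF A u])
  finally show ?thesis .
qed

lemma common_eigenvector:
  fixes A B M :: "'a::field mat"
  assumes carr: "A \<in> carrier_mat n n" "B \<in> carrier_mat n n" "M \<in> carrier_mat n n"
    and AB: "A * B = B * A" and AM: "A * M = M * A" and BM: "B * M = M * B"
    and annA: "annihilated_by A as" and annB: "annihilated_by B bs"
    and v: "eigenvector M v \<mu>"
  shows "\<exists>w a b. a \<in> set as \<and> b \<in> set bs \<and>
    eigenvector M w \<mu> \<and> eigenvector A w a \<and> eigenvector B w b"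
proof -
  have preserve: "X *\<^sub>v (char_matrix C c *\<^sub>v u) = x \<cdot>\<^sub>v (char_matrix C c *\<^sub>v u)"
    if "C \<in> carrier_mat n n" "X \<in> carrier_mat n n" "C * X = X * C"
      "u \<in> carrier_vec n" "X *\<^sub>v u = x \<cdot>\<^sub>v u" for C X c u x
    using that by (intro commute_preserves_eigenspace[of _ n] char_matrix_commute) auto
  have v': "v \<in> carrier_vec n" "v \<noteq> 0\<^sub>v n" "M *\<^sub>v v = \<mu> \<cdot>\<^sub>v v"
    using v carr(3) unfolding eigenvector_def by auto
  obtain a w where a: "a \<in> set as" and Mw: "M *\<^sub>v w = \<mu> \<cdot>\<^sub>v w" and Aw: "eigenvector A w a"
    using eigenvector_in_invariant_set[where V = "\<lambda>u. M *\<^sub>v u = \<mu> \<cdot>\<^sub>v u",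
        OF carr(1) v' preserve[OF carr(1,3) AM] annA]
    by blast
  have w: "w \<in> carrier_vec n" "w \<noteq> 0\<^sub>v n" "M *\<^sub>v w = \<mu> \<cdot>\<^sub>v w \<and> A *\<^sub>v w = a \<cdot>\<^sub>v w"
    using Aw Mw carr(1) unfolding eigenvector_def by auto
  obtain b x where b: "b \<in> set bs" and x: "M *\<^sub>v x = \<mu> \<cdot>\<^sub>v x \<and> A *\<^sub>v x = a \<cdot>\<^sub>v x"
    and Bx: "eigenvector B x b"
    using eigenvector_in_invariant_set[where V = "\<lambda>u. M *\<^sub>v u = \<mu> \<cdot>\<^sub>v u \<and> A *\<^sub>v u = a \<cdot>\<^sub>v u",
        OF carr(2) w] annB preserve[OF carr(2,3) BM] preserve[OF carr(2,1) AB[symmetric]]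
    by blast
  have "eigenvector M x \<mu>" "eigenvector A x a"
    using Bx x carr unfolding eigenvector_def by auto
  then show ?thesis using a b Bx by blast
qed

lemma mat_vec_eigen_add:
  assumes "X \<in> carrier_mat n n" "Y \<in> carrier_mat n n" "w \<in> carrier_vec n"
    and "X *\<^sub>v w = a \<cdot>\<^sub>v w" "Y *\<^sub>v w = b \<cdot>\<^sub>v w"
  shows "(X + Y) *\<^sub>v w = (a + b :: 'a::field) \<cdot>\<^sub>v w"
  using assms by (simp add: add_mult_distrib_mat_vec[of X n n] add_smult_distrib_vec)

lemma mat_vec_eigen_minus:
  assumes "X \<in> carrier_mat n n" "Y \<in> carrier_mat n n" "w \<in> carrier_vec n"
    and "X *\<^sub>v w = a \<cdot>\<^sub>v w" "Y *\<^sub>v w = b \<cdot>\<^sub>v w"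
  shows "(X - Y) *\<^sub>v w = (a - b :: 'a::field) \<cdot>\<^sub>v w"
  using assms by (auto simp: minus_mult_distrib_mat_vec[of X n n] algebra_simps intro!: eq_vecI)

lemma mat_vec_eigen_mult:
  assumes "X \<in> carrier_mat n n" "Y \<in> carrier_mat n n" "w \<in> carrier_vec n"
    and "X *\<^sub>v w = a \<cdot>\<^sub>v w" "Y *\<^sub>v w = b \<cdot>\<^sub>v w"
  shows "(X * Y) *\<^sub>v w = (a * b :: 'a::field) \<cdot>\<^sub>v w"
  using assms by (auto simp: mult_mat_vec[of X n n] intro!: eq_vecI)

lemma mat_vec_eigen_smult:
  assumes "X \<in> carrier_mat n n" "w \<in> carrier_vec n" and "X *\<^sub>v w = a \<cdot>\<^sub>v w"
  shows "(c \<cdot>\<^sub>m X) *\<^sub>v w = (c * a :: 'a::field) \<cdot>\<^sub>v w"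
proof -
  have "(c \<cdot>\<^sub>m X) *\<^sub>v w = c \<cdot>\<^sub>v (X *\<^sub>v w)"
    using assms(1,2) by (auto simp: scalar_prod_def sum_distrib_left algebra_simps intro!: eq_vecI)
  then show ?thesis using assms(3) by (simp add: smult_smult_assoc)
qed

lemma eigenvector_eigenvalue_unique:
  assumes "eigenvector A w a" and "A *\<^sub>v w = b \<cdot>\<^sub>v w"
  shows "a = (b :: 'a::field)"
proof -
  from assms(1) have w: "w \<in> carrier_vec (dim_row A)" "w \<noteq> 0\<^sub>v (dim_row A)"
    and "a \<cdot>\<^sub>v w = b \<cdot>\<^sub>v w" using assms(2) unfolding eigenvector_def by auto
  obtain i where "i < dim_row A" "w $ i \<noteq> 0" using w by (metis eq_vecI carrier_vecD index_zero_vec)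
  with \<open>a \<cdot>\<^sub>v w = b \<cdot>\<^sub>v w\<close> w show ?thesis by (metis index_smult_vec(1) carrier_vecD mult_cancel_right)
qed

lemma spectral_radius_le_iff:
  assumes "A \<in> carrier_mat n n" and "0 < n"
  shows "spectral_radius A \<le> c \<longleftrightarrow> (\<forall>z \<in> spectrum A. norm z \<le> c)"
  using spectral_radius_mem_max[OF assms] by (metis image_eqI imageE order.trans)

lemma spectral_radius_nonneg:
  assumes "A \<in> carrier_mat n n" and "0 < n"
  shows "0 \<le> spectral_radius A"
  using spectral_radius_mem_max(1)[OF assms] by auto

lemma real_diagonalizable_annihilated_by:
  assumes "real_diagonalizable n R"
  shows "\<exists>as. set as \<subseteq> \<real> \<and> annihilated_by (map_mat complex_of_real R) as"
proof -
  from assms obtain D where R: "R \<in> carrier_mat n n" and D: "diagonal_mat D" "similar_mat R D"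
    unfolding real_diagonalizable_def by blast
  from similar_matD[OF D(2)] R have Dn: "D \<in> carrier_mat n n" by auto
  let ?Dc = "map_mat complex_of_real D"
  have "annihilated_by ?Dc (diag_mat ?Dc)"
    using Dn D(1)
    by (intro diagonal_mat_annihilated_by_diag_mat[of _ n]) (auto simp: diagonal_mat_def)
  then have "annihilated_by (map_mat complex_of_real R) (diag_mat ?Dc)"
    by (rule annihilated_by_similar[OF of_real_hom.similar_mat_hom[OF D(2)]])
  moreover have "set (diag_mat ?Dc) \<subseteq> \<real>"
    using Dn by (auto simp: diag_mat_def)
  ultimately show ?thesis by blast
qed

definition bfecc_amplification :: "complex \<Rightarrow> complex" where
  "bfecc_amplification z = z * (1 + 1/2 * (1 - cnj z * z))"

lemma bfecc_symbol_carrier: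
  assumes "Q \<in> carrier_mat n n" and "Qs \<in> carrier_mat n n"
  shows "bfecc_symbol n Q Qs \<in> carrier_mat n n"
  using assms unfolding bfecc_symbol_def by (simp add: minus_carrier_mat)

lemma bfecc_symbol_eigenvector:
  assumes Q: "Q \<in> carrier_mat n n" and Qs: "Qs \<in> carrier_mat n n" and w: "w \<in> carrier_vec n"
    and Qw: "Q *\<^sub>v w = z \<cdot>\<^sub>v w" and Qsw: "Qs *\<^sub>v w = cnj z \<cdot>\<^sub>v w"
  shows "bfecc_symbol n Q Qs *\<^sub>v w = bfecc_amplification z \<cdot>\<^sub>v w"
proof -
  have QsQ: "Qs * Q \<in> carrier_mat n n" using Q Qs by simp
  have one: "1\<^sub>m n *\<^sub>v w = 1 \<cdot>\<^sub>v w" using w by simp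
  have "(1\<^sub>m n - Qs * Q) *\<^sub>v w = (1 - cnj z * z) \<cdot>\<^sub>v w"
    by (rule mat_vec_eigen_minus[OF one_carrier_mat QsQ w one mat_vec_eigen_mult[OF Qs Q w Qsw Qw]])
  then have "((1/2) \<cdot>\<^sub>m (1\<^sub>m n - Qs * Q)) *\<^sub>v w = (1/2 * (1 - cnj z * z)) \<cdot>\<^sub>v w"
    using QsQ w by (intro mat_vec_eigen_smult[of _ n]) (auto simp: minus_carrier_mat)
  then have "(1\<^sub>m n + (1/2) \<cdot>\<^sub>m (1\<^sub>m n - Qs * Q)) *\<^sub>v w = (1 + 1/2 * (1 - cnj z * z)) \<cdot>\<^sub>v w"
    using QsQ w one by (intro mat_vec_eigen_add[of _ n]) (auto simp: minus_carrier_mat)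
  then show ?thesis
    unfolding bfecc_symbol_def bfecc_amplification_def using Q QsQ w Qw
    by (intro mat_vec_eigen_mult[of _ n]) (auto simp: minus_carrier_mat)
qed

lemma bfecc_symbol_commute:
  assumes A: "A \<in> carrier_mat n n" and Q: "Q \<in> carrier_mat n n" and Qs: "Qs \<in> carrier_mat n n"
    and AQ: "A * Q = Q * A" and AQs: "A * Qs = Qs * A"
  shows "A * bfecc_symbol n Q Qs = bfecc_symbol n Q Qs * A"
proof -
  define D where "D = 1\<^sub>m n - Qs * Q"
  have QsQ: "Qs * Q \<in> carrier_mat n n" and D: "D \<in> carrier_mat n n"
    using Q Qs by (simp_all add: D_def minus_carrier_mat)
  have one: "A * 1\<^sub>m n = 1\<^sub>m n * A" using A by simp
  have "A * D = D * A"
    unfolding D_def by (rule mat_commute_minus[OF A one_carrier_mat QsQ one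
          mat_commute_mult[OF A Qs Q AQs AQ]])
  then have "A * (1\<^sub>m n + (1/2) \<cdot>\<^sub>m D) = (1\<^sub>m n + (1/2) \<cdot>\<^sub>m D) * A"
    using mat_commute_add[OF A one_carrier_mat smult_carrier_mat[OF D] one]
      mat_commute_smult[OF A D] by blast
  then show ?thesis
    unfolding bfecc_symbol_def D_def[symmetric] using A Q D
    by (intro mat_commute_mult[OF A Q] AQ) auto
qed

lemma mult_abs_three_minus_square_le_two_iff:
  fixes t :: real
  assumes t: "0 \<le> t"
  shows "t * \<bar>3 - t\<^sup>2\<bar> \<le> 2 \<longleftrightarrow> t \<le> 2"
proof (cases "t\<^sup>2 \<le> 3")
  case True
  have "2 - t * (3 - t\<^sup>2) = (t - 1)\<^sup>2 * (t + 2)"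
    by (simp add: power2_eq_square algebra_simps)
  moreover have "0 \<le> (t - 1)\<^sup>2 * (t + 2)"
    using t by simp
  moreover have "t \<le> 2"
    by (rule power2_le_imp_le[of t 2]) (use True in auto)
  ultimately show ?thesis
    using True by (simp add: abs_of_nonneg)
next
  case False
  have "t * (t\<^sup>2 - 3) - 2 = (t - 2) * (t + 1)\<^sup>2"
    by (simp add: power2_eq_square algebra_simps)
  moreover have "(t - 2) * (t + 1)\<^sup>2 \<le> 0 \<longleftrightarrow> t - 2 \<le> 0"
    using t mult_le_cancel_right_pos[of "(t + 1)\<^sup>2" "t - 2" 0] by simp
  ultimately show ?thesis
    using False by (simp add: abs_of_neg) linarith
qed

lemma norm_bfecc_amplification_le_one_iff:
  "norm (bfecc_amplification z) \<le> 1 \<longleftrightarrow> norm z \<le> 2"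
proof -
  define c where "c = (3 - (norm z)\<^sup>2) / 2"
  have "cnj z * z = complex_of_real ((norm z)\<^sup>2)"
    by (metis complex_norm_square mult.commute of_real_power)
  then have "bfecc_amplification z = z * complex_of_real c"
    unfolding bfecc_amplification_def c_def by (simp add: field_simps)
  then have "norm (bfecc_amplification z) = norm z * \<bar>c\<bar>"
    by (simp only: norm_mult norm_of_real)
  also have "\<dots> = norm z * \<bar>3 - (norm z)\<^sup>2\<bar> / 2"
    by (simp add: c_def)
  finally have "norm (bfecc_amplification z) \<le> 1 \<longleftrightarrow> norm z * \<bar>3 - (norm z)\<^sup>2\<bar> \<le> 2"
    by linarith
  then show ?thesis
    by (simp add: mult_abs_three_minus_square_le_two_iff)
qed

lemma joint_eigenvector_conj_mat:
  assumes Q: "Q \<in> carrier_mat n n" and normal: "conj_mat Q * Q = Q * conj_mat Q"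
    and re: "real_diagonalizable n (re_mat Q)" and im: "real_diagonalizable n (im_mat Q)"
    and M: "M \<in> carrier_mat n n" and MQ: "M * Q = Q * M" and MQs: "M * conj_mat Q = conj_mat Q * M"
    and v: "eigenvector M v \<mu>"
  shows "\<exists>w z. eigenvector M w \<mu> \<and> Q *\<^sub>v w = z \<cdot>\<^sub>v w \<and> conj_mat Q *\<^sub>v w = cnj z \<cdot>\<^sub>v w"
proof -
  define Qs where "Qs = conj_mat Q"
  define Rc where "Rc = map_mat complex_of_real (re_mat Q)"
  define Ic where "Ic = map_mat complex_of_real (im_mat Q)"
  have carr: "Qs \<in> carrier_mat n n" "Rc \<in> carrier_mat n n" "Ic \<in> carrier_mat n n"
    using Q by (auto simp: Qs_def Rc_def Ic_def conj_mat_def re_mat_def im_mat_def)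
  have Rc_eq: "Rc = (1/2) \<cdot>\<^sub>m (Q + Qs)" and Ic_eq: "Ic = (- \<i>/2) \<cdot>\<^sub>m (Q - Qs)"
    by (rule eq_matI; use Q in \<open>auto simp: Qs_def Rc_def Ic_def conj_mat_def re_mat_def
        im_mat_def complex_eq_iff\<close>)+
  have Q_eq: "Q = Rc + \<i> \<cdot>\<^sub>m Ic" and Qs_eq: "Qs = Rc + (- \<i>) \<cdot>\<^sub>m Ic"
    by (rule eq_matI; use Q in \<open>auto simp: Qs_def Rc_def Ic_def conj_mat_def re_mat_def
        im_mat_def complex_eq_iff\<close>)+
  have parts_commute: "Rc * X = X * Rc" "Ic * X = X * Ic"
    if X: "X \<in> carrier_mat n n" and "X * Q = Q * X" "X * Qs = Qs * X" for X
  proof -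
    have "X * Rc = Rc * X" "X * Ic = Ic * X"
      unfolding Rc_eq Ic_eq using that Q carr(1)
      by (intro mat_commute_smult[of _ n] mat_commute_add[of _ n] mat_commute_minus[of _ n];
          simp add: minus_carrier_mat)+
    then show "Rc * X = X * Rc" "Ic * X = X * Ic" by simp_all
  qed
  have QQs: "Q * Qs = Qs * Q" using normal by (simp add: Qs_def)
  have "Rc * Q = Q * Rc" "Rc * Qs = Qs * Rc"
    using parts_commute[OF Q refl QQs] parts_commute[OF carr(1) QQs[symmetric] refl] by simp_all
  then have RI: "Rc * Ic = Ic * Rc" using parts_commute(2)[OF carr(2)] by simp
  obtain as where as: "set as \<subseteq> \<real>" "annihilated_by Rc as"
    using real_diagonalizable_annihilated_by[OF re] unfolding Rc_def by blast
  obtain bs where bs: "set bs \<subseteq> \<real>" "annihilated_by Ic bs"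
    using real_diagonalizable_annihilated_by[OF im] unfolding Ic_def by blast
  obtain w a b where ab: "a \<in> \<real>" "b \<in> \<real>" and w: "eigenvector M w \<mu>"
    and wR: "eigenvector Rc w a" and wI: "eigenvector Ic w b"
    using common_eigenvector[OF carr(2,3) M RI parts_commute[OF M MQ MQs[folded Qs_def]]
        as(2) bs(2) v] as(1) bs(1)
    by blast
  have w': "w \<in> carrier_vec n" "Rc *\<^sub>v w = a \<cdot>\<^sub>v w" "Ic *\<^sub>v w = b \<cdot>\<^sub>v w"
    using wR wI carr unfolding eigenvector_def by auto
  have "Q *\<^sub>v w = (a + \<i> * b) \<cdot>\<^sub>v w"
    unfolding Q_eq using carr w' by (intro mat_vec_eigen_add[of _ n] mat_vec_eigen_smult) auto
  moreover have "Qs *\<^sub>v w = (a + (- \<i>) * b) \<cdot>\<^sub>v w"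
    unfolding Qs_eq using carr w' by (intro mat_vec_eigen_add[of _ n] mat_vec_eigen_smult) auto
  moreover have "a + (- \<i>) * b = cnj (a + \<i> * b)"
    using ab by (simp add: Reals_cnj_iff)
  ultimately show ?thesis using w unfolding Qs_def by metis
qed

lemma spectrum_bfecc_symbol:
  assumes Q: "Q \<in> carrier_mat n n" and normal: "conj_mat Q * Q = Q * conj_mat Q"
    and re: "real_diagonalizable n (re_mat Q)" and im: "real_diagonalizable n (im_mat Q)"
  shows "spectrum (bfecc_symbol n Q (conj_mat Q)) = bfecc_amplification ` spectrum Q"
proof -
  define Qs where "Qs = conj_mat Q"
  define QB where "QB = bfecc_symbol n Q Qs"
  have Qs: "Qs \<in> carrier_mat n n" using Q by (simp add: Qs_def conj_mat_def)
  have QB: "QB \<in> carrier_mat n n" unfolding QB_def using Q Qs by (rule bfecc_symbol_carrier)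
  have QQs: "Q * Qs = Qs * Q" using normal by (simp add: Qs_def)
  have QB_commute: "QB * Q = Q * QB" "QB * Qs = Qs * QB"
    using bfecc_symbol_commute[OF Q Q Qs refl QQs]
      bfecc_symbol_commute[OF Qs Q Qs QQs[symmetric] refl]
    unfolding QB_def by simp_all
  have joint: "\<exists>w z. eigenvector M w \<mu> \<and> Q *\<^sub>v w = z \<cdot>\<^sub>v w \<and> Qs *\<^sub>v w = cnj z \<cdot>\<^sub>v w"
    if "M \<in> carrier_mat n n" "M * Q = Q * M" "M * Qs = Qs * M" "eigenvector M v \<mu>" for M v \<mu>
    using joint_eigenvector_conj_mat[OF Q normal re im] that unfolding Qs_def by blast
  have QB_eigen: "QB *\<^sub>v w = bfecc_amplification z \<cdot>\<^sub>v w"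
    if "w \<in> carrier_vec n" "Q *\<^sub>v w = z \<cdot>\<^sub>v w" "Qs *\<^sub>v w = cnj z \<cdot>\<^sub>v w" for w z
    unfolding QB_def using bfecc_symbol_eigenvector[OF Q Qs] that by blast
  show ?thesis
    unfolding QB_def[unfolded Qs_def, symmetric]
  proof (intro equalityI subsetI)
    fix \<mu> assume "\<mu> \<in> spectrum QB"
    then obtain v where "eigenvector QB v \<mu>" unfolding spectrum_def eigenvalue_def by blast
    then obtain w z where w: "eigenvector QB w \<mu>" "Q *\<^sub>v w = z \<cdot>\<^sub>v w" "Qs *\<^sub>v w = cnj z \<cdot>\<^sub>v w"
      using joint[OF QB QB_commute] by blast
    then have "eigenvector Q w z" using Q QB unfolding eigenvector_def by auto
    moreover have "\<mu> = bfecc_amplification z"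
      using eigenvector_eigenvalue_unique[OF w(1)] QB_eigen w QB unfolding eigenvector_def by auto
    ultimately show "\<mu> \<in> bfecc_amplification ` spectrum Q"
      unfolding spectrum_def eigenvalue_def by blast
  next
    fix \<mu> assume "\<mu> \<in> bfecc_amplification ` spectrum Q"
    then obtain z v where \<mu>: "\<mu> = bfecc_amplification z" and "eigenvector Q v z"
      unfolding spectrum_def eigenvalue_def by blast
    then obtain w z' where w: "eigenvector Q w z" "Q *\<^sub>v w = z' \<cdot>\<^sub>v w" "Qs *\<^sub>v w = cnj z' \<cdot>\<^sub>v w"
      using joint[OF Q refl QQs] by blast
    then have "z' = z" using eigenvector_eigenvalue_unique[OF w(1)] by simp
    then have "eigenvector QB w \<mu>"
      using w QB_eigen Q QB unfolding \<mu> eigenvector_def by auto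
    then show "\<mu> \<in> spectrum QB" unfolding spectrum_def eigenvalue_def by blast
  qed
qed

lemma bfecc_spectral_radius_le_one_iff:
  assumes Q: "Q \<in> carrier_mat n n" and n: "0 < n" and normal: "conj_mat Q * Q = Q * conj_mat Q"
    and re: "real_diagonalizable n (re_mat Q)" and im: "real_diagonalizable n (im_mat Q)"
  shows "\<bar>spectral_radius (bfecc_symbol n Q (conj_mat Q))\<bar> \<le> 1 \<longleftrightarrow> \<bar>spectral_radius Q\<bar> \<le> 2"
proof -
  have QB: "bfecc_symbol n Q (conj_mat Q) \<in> carrier_mat n n"
    using Q by (intro bfecc_symbol_carrier) (auto simp: conj_mat_def)
  show ?thesis
    using spectral_radius_le_iff[OF QB n] spectral_radius_le_iff[OF Q n]
      spectral_radius_nonneg[OF QB n] spectral_radius_nonneg[OF Q n]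
    by (simp add: spectrum_bfecc_symbol[OF Q normal re im] norm_bfecc_amplification_le_one_iff)
qed

theorem theorem2p1:
  fixes d m :: nat and N :: "nat list" and A :: "nat \<Rightarrow> real mat"
    and QL QLs :: "int list \<Rightarrow> complex mat"
  assumes d: "d \<ge> 1" and lenN: "length N = d" and Npos: "\<forall>i<d. N ! i \<ge> 1"
    and m: "m \<ge> 1"
    and hyp: "hyperbolic_system d m A"
    and carrL: "\<forall>k\<in>dual_index_set N. QL k \<in> carrier_mat m m"
    and carrLs: "\<forall>k\<in>dual_index_set N. QLs k \<in> carrier_mat m m"
    and c1: "\<forall>k\<in>dual_index_set N. QLs k = conj_mat (QL k)"
    and c2: "\<forall>k\<in>dual_index_set N. QLs k * QL k = QL k * QLs k"
    and c3: "\<forall>k\<in>dual_index_set N. real_diagonalizable m (re_mat (QL k)) \<and>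
                                      real_diagonalizable m (im_mat (QL k))"
  shows "(\<forall>k\<in>dual_index_set N. \<bar>spectral_radius (bfecc_symbol m (QL k) (QLs k))\<bar> \<le> 1)
     \<longleftrightarrow> (\<forall>k\<in>dual_index_set N. \<bar>spectral_radius (QL k)\<bar> \<le> 2)"
proof (intro ball_cong refl)
  fix k assume k: "k \<in> dual_index_set N"
  then have "QLs k = conj_mat (QL k)" using c1 by blast
  moreover have "\<bar>spectral_radius (bfecc_symbol m (QL k) (conj_mat (QL k)))\<bar> \<le> 1
      \<longleftrightarrow> \<bar>spectral_radius (QL k)\<bar> \<le> 2"
    using k m carrL c2 c3 c1 by (intro bfecc_spectral_radius_le_one_iff) auto
  ultimately show "\<bar>spectral_radius (bfecc_symbol m (QL k) (QLs k))\<bar> \<le> 1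
      \<longleftrightarrow> \<bar>spectral_radius (QL k)\<bar> \<le> 2" by simp
qed

end
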